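(* Let $G=\mathbb Z\wr\mathbb Z=\langle a\rangle\wr\langle b\rangle$. Then $\mathrm{pw}(G,\{a,b\})=3$.
   Context: $a$ generates the first (base) infinite cyclic factor and $b$ the second (acting) infinite cyclic factor of the restricted wreath product. A palindrome in a group generated by $X$ is an element represented by a reduced word in $X^{\pm1}$ reading the same forwards and backwards; $l_{\mathcal P}(g)$ is the minimal number of palindromes whose product is $g$; $\mathrm{pw}(G,X)=\sup_{g\in G}l_{\mathcal P}(g)$. *)

theory Defs
  imports Main "HOL-Library.Extended_Nat"
begin

text \<open>The restricted wreath product Z wr Z = (direct sum over Z of Z) semidirect Z.
  An element is a pair (f, n) with f :: int \<Rightarrow> int finitely supported (the base
  part) and n :: int (the acting part).\<close>

type_synonym wr = "(int \<Rightarrow> int) \<times> int"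

definition wr_carrier :: "wr set" where
  "wr_carrier = {(f, n). finite {x. f x \<noteq> 0}}"

definition wr_mult :: "wr \<Rightarrow> wr \<Rightarrow> wr" where
  "wr_mult p q = (\<lambda>x. fst p x + fst q (x - snd p), snd p + snd q)"

definition wr_one :: wr where
  "wr_one = (\<lambda>_. 0, 0)"

definition wr_inv :: "wr \<Rightarrow> wr" where
  "wr_inv p = (\<lambda>x. - fst p (x + snd p), - snd p)"

definition wr_a :: wr where
  "wr_a = ((\<lambda>x. if x = 0 then 1 else 0), 0)"

definition wr_b :: wr where
  "wr_b = ((\<lambda>_. 0), 1)"

text \<open>Letters of the alphabet {a, b, a^-1, b^-1}: (gen, positive) where gen = True
  means a, gen = False means b; positive = False means the inverse letter.\<close>
type_synonym letter = "bool \<times> bool"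

definition letter_val :: "letter \<Rightarrow> wr" where
  "letter_val l = (let g = (if fst l then wr_a else wr_b) in if snd l then g else wr_inv g)"

fun word_val :: "letter list \<Rightarrow> wr" where
  "word_val [] = wr_one"
| "word_val (l # w) = wr_mult (letter_val l) (word_val w)"

fun reduced_word :: "letter list \<Rightarrow> bool" where
  "reduced_word (l1 # l2 # w) = (\<not> (fst l1 = fst l2 \<and> snd l1 \<noteq> snd l2) \<and> reduced_word (l2 # w))"
| "reduced_word _ = True"

definition palindrome :: "wr \<Rightarrow> bool" where
  "palindrome g \<longleftrightarrow> (\<exists>w. reduced_word w \<and> rev w = w \<and> word_val w = g)"

fun wr_prod :: "wr list \<Rightarrow> wr" where
  "wr_prod [] = wr_one"
| "wr_prod (p # ps) = wr_mult p (wr_prod ps)"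

text \<open>Palindromic length (infinite if g is not a product of palindromes).\<close>
definition pal_length :: "wr \<Rightarrow> enat" where
  "pal_length g = (INF n \<in> {n. \<exists>ps. length ps = n \<and> (\<forall>p\<in>set ps. palindrome p) \<and> wr_prod ps = g}. enat n)"

definition pal_width :: enat where
  "pal_width = (SUP g \<in> wr_carrier. pal_length g)"

end

theory Submission
  imports Defs
begin

text \<open>Reversing words induces the anti-automorphism \<open>(f, p) \<mapsto> (\<lambda>x. f (p - x), p)\<close>, which
  fixes both generators; so a palindrome \<open>(f, p)\<close> is symmetric, \<open>f x = f (p - x)\<close>, and
  conversely every finitely supported symmetric element is spelled by the palindromic reduced
  word \<open>b\<^sup>l a\<^sup>c\<^sup>0 b a\<^sup>c\<^sup>1 b \<dots> b a\<^sup>c\<^sup>k b\<^sup>l\<close>. Given \<open>(h, N)\<close>, tail sums of \<open>h\<close> split it as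
  \<open>h = A + B\<close> with \<open>A\<close> symmetric about 0 and \<open>B\<close> about 1, whence
  \<open>(h, N) = (A, 0) (B, 1) (0, N - 1)\<close> is a product of three palindromes. On the other hand a
  product of at most two palindromes with trivial acting part is again symmetric, which
  \<open>a \<cdot> b a\<^sup>2 b\<^sup>-\<^sup>1\<close> is not.\<close>

lemma wr_mult_one_left [simp]: "wr_mult wr_one q = q"
  by (simp add: wr_mult_def wr_one_def)

lemma wr_mult_one_right [simp]: "wr_mult q wr_one = q"
  by (simp add: wr_mult_def wr_one_def)

lemma wr_mult_assoc: "wr_mult (wr_mult p q) r = wr_mult p (wr_mult q r)"
  by (simp add: wr_mult_def fun_eq_iff algebra_simps)

lemma word_val_append: "word_val (u @ v) = wr_mult (word_val u) (word_val v)"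
  by (induction u) (simp_all add: wr_mult_assoc)

definition symmetric_about :: "int \<Rightarrow> (int \<Rightarrow> int) \<Rightarrow> bool" where
  "symmetric_about c f \<longleftrightarrow> (\<forall>x. f x = f (c - x))"

subsection \<open>Palindromes are symmetric\<close>

definition wr_rev :: "wr \<Rightarrow> wr" where
  "wr_rev g = (\<lambda>x. fst g (snd g - x), snd g)"

lemma wr_rev_mult: "wr_rev (wr_mult p q) = wr_mult (wr_rev q) (wr_rev p)"
  by (simp add: wr_rev_def wr_mult_def fun_eq_iff algebra_simps)

lemma wr_rev_letter_val: "wr_rev (letter_val l) = letter_val l"
  by (cases l) (auto simp: wr_rev_def letter_val_def wr_a_def wr_b_def wr_inv_def fun_eq_iff Let_def)

lemma word_val_rev: "word_val (rev w) = wr_rev (word_val w)"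
proof (induction w)
  case Nil
  then show ?case by (simp add: wr_rev_def wr_one_def)
next
  case (Cons l w)
  then show ?case by (simp add: word_val_append wr_rev_mult wr_rev_letter_val)
qed

lemma palindrome_symmetric:
  assumes "palindrome g"
  shows "symmetric_about (snd g) (fst g)"
proof -
  obtain w where "rev w = w" "word_val w = g"
    using assms by (auto simp: palindrome_def)
  then have "wr_rev g = g"
    by (metis word_val_rev)
  then show ?thesis
    unfolding symmetric_about_def by (metis fst_conv wr_rev_def)
qed

subsection \<open>Symmetric elements are palindromes\<close>

definition cancelling :: "letter \<Rightarrow> letter \<Rightarrow> bool" where
  "cancelling l1 l2 \<longleftrightarrow> fst l1 = fst l2 \<and> snd l1 \<noteq> snd l2"

lemma reduced_word_Cons_iff:
  "reduced_word (l # w) \<longleftrightarrow> (w \<noteq> [] \<longrightarrow> \<not> cancelling l (hd w)) \<and> reduced_word w"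
  by (cases w) (auto simp: cancelling_def)

lemma reduced_word_append_iff:
  "reduced_word (u @ v) \<longleftrightarrow> reduced_word u \<and> reduced_word v \<and>
     (u \<noteq> [] \<longrightarrow> v \<noteq> [] \<longrightarrow> \<not> cancelling (last u) (hd v))"
  by (induction u) (auto simp: reduced_word_Cons_iff)

lemma reduced_word_replicate: "reduced_word (replicate n l)"
  by (induction n) (auto simp: reduced_word_Cons_iff cancelling_def)

definition a_pow_word :: "int \<Rightarrow> letter list" where
  "a_pow_word c = replicate (nat \<bar>c\<bar>) (True, c \<ge> 0)"

definition b_pow_word :: "int \<Rightarrow> letter list" where
  "b_pow_word c = replicate (nat \<bar>c\<bar>) (False, c \<ge> 0)"

lemma word_val_replicate_a:
  "word_val (replicate n (True, s)) = (\<lambda>x. if x = 0 then (if s then int n else - int n) else 0, 0)"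
  by (induction n) (auto simp: letter_val_def wr_a_def wr_inv_def wr_mult_def wr_one_def fun_eq_iff)

lemma word_val_replicate_b:
  "word_val (replicate n (False, s)) = (\<lambda>x. 0, if s then int n else - int n)"
  by (induction n) (auto simp: letter_val_def wr_b_def wr_inv_def wr_mult_def wr_one_def fun_eq_iff)

lemma word_val_a_pow_word: "word_val (a_pow_word c) = (\<lambda>x. if x = 0 then c else 0, 0)"
  by (auto simp: a_pow_word_def word_val_replicate_a fun_eq_iff)

lemma word_val_b_pow_word: "word_val (b_pow_word c) = (\<lambda>x. 0, c)"
  by (auto simp: b_pow_word_def word_val_replicate_b)

fun coeff_word :: "int list \<Rightarrow> letter list" where
  "coeff_word [] = []"
| "coeff_word [c] = a_pow_word c"
| "coeff_word (c # d # cs) = a_pow_word c @ (False, True) # coeff_word (d # cs)"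

lemma coeff_word_no_b_inv: "l \<in> set (coeff_word cs) \<Longrightarrow> fst l \<or> snd l"
  by (induction cs rule: coeff_word.induct) (auto simp: a_pow_word_def)

lemma reduced_coeff_word: "reduced_word (coeff_word cs)"
proof (induction cs rule: coeff_word.induct)
  case (3 c d cs)
  have "\<not> cancelling (False, True) (hd (coeff_word (d # cs)))" if "coeff_word (d # cs) \<noteq> []"
    using coeff_word_no_b_inv[of "hd (coeff_word (d # cs))" "d # cs"] that
    by (auto simp: cancelling_def)
  with 3 show ?case
    by (auto simp: reduced_word_append_iff reduced_word_Cons_iff a_pow_word_def
        reduced_word_replicate cancelling_def)
qed (auto simp: a_pow_word_def reduced_word_replicate)

lemma coeff_word_append:
  "cs \<noteq> [] \<Longrightarrow> ds \<noteq> [] \<Longrightarrow> coeff_word (cs @ ds) = coeff_word cs @ (False, True) # coeff_word ds"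
proof (induction cs rule: coeff_word.induct)
  case (2 c)
  then show ?case by (cases ds) auto
qed auto

lemma rev_coeff_word: "rev (coeff_word cs) = coeff_word (rev cs)"
proof (induction cs)
  case (Cons c cs)
  show ?case
  proof (cases "cs = []")
    case False
    have "rev (coeff_word ([c] @ cs)) = coeff_word (rev cs) @ (False, True) # a_pow_word c"
      using False Cons coeff_word_append[of "[c]" cs] by (simp add: a_pow_word_def)
    also have "\<dots> = coeff_word (rev cs @ [c])"
      using False by (simp add: coeff_word_append)
    finally show ?thesis by simp
  qed (simp add: a_pow_word_def)
qed simp

lemma hd_coeff_word:
  "cs \<noteq> [] \<Longrightarrow> hd cs \<noteq> 0 \<Longrightarrow> coeff_word cs \<noteq> [] \<and> fst (hd (coeff_word cs))"
  by (induction cs rule: coeff_word.induct) (auto simp: a_pow_word_def)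

lemma last_coeff_word:
  assumes "cs \<noteq> []" "last cs \<noteq> 0"
  shows "coeff_word cs \<noteq> [] \<and> fst (last (coeff_word cs))"
  using hd_coeff_word[of "rev cs"] assms
  by (metis Nil_is_rev_conv hd_rev rev_coeff_word rev_is_Nil_conv rev_rev_ident)

lemma word_val_coeff_word:
  "cs \<noteq> [] \<Longrightarrow> word_val (coeff_word cs) =
     (\<lambda>x. if 0 \<le> x \<and> x < int (length cs) then cs ! nat x else 0, int (length cs) - 1)"
proof (induction cs rule: coeff_word.induct)
  case (3 c d cs)
  have "word_val (coeff_word (c # d # cs)) =
    wr_mult (word_val (a_pow_word c)) (wr_mult (letter_val (False, True)) (word_val (coeff_word (d # cs))))"
    by (simp add: word_val_append)
  then show ?case
    by (simp add: 3 word_val_a_pow_word letter_val_def wr_b_def wr_mult_def fun_eq_iff)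
      (auto simp: nth_Cons' nat_diff_distrib)
qed (auto simp: word_val_a_pow_word fun_eq_iff)

lemma word_val_conj_coeff_word:
  assumes "cs \<noteq> []"
  shows "word_val (b_pow_word k @ coeff_word cs @ b_pow_word k) =
    (\<lambda>x. if k \<le> x \<and> x < k + int (length cs) then cs ! nat (x - k) else 0, 2 * k + int (length cs) - 1)"
  using assms
  by (simp add: word_val_append word_val_b_pow_word word_val_coeff_word wr_mult_def fun_eq_iff)

lemma palindrome_conj_coeff_word:
  assumes "cs \<noteq> []" "rev cs = cs" "hd cs \<noteq> 0"
  shows "palindrome (word_val (b_pow_word k @ coeff_word cs @ b_pow_word k))"
proof -
  have "last cs \<noteq> 0"
    using assms by (metis hd_rev)
  then have "reduced_word (b_pow_word k @ coeff_word cs @ b_pow_word k)"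
    using hd_coeff_word[OF assms(1,3)] last_coeff_word[OF assms(1)]
    by (auto simp: reduced_word_append_iff reduced_coeff_word reduced_word_replicate
        b_pow_word_def cancelling_def)
  moreover have "rev (b_pow_word k @ coeff_word cs @ b_pow_word k) = b_pow_word k @ coeff_word cs @ b_pow_word k"
    using assms(2) by (simp add: rev_coeff_word b_pow_word_def)
  ultimately show ?thesis
    unfolding palindrome_def by blast
qed

lemma symmetric_imp_palindrome:
  assumes fin: "finite {x. f x \<noteq> 0}" and sym: "symmetric_about p f"
  shows "palindrome (f, p)"
proof (cases "f = (\<lambda>x. 0)")
  case True
  then show ?thesis unfolding palindrome_def
    by (intro exI[of _ "b_pow_word p"]) (simp add: b_pow_word_def reduced_word_replicate word_val_replicate_b)
next
  case False
  define lo where "lo = Min {x. f x \<noteq> 0}"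
  have "{x. f x \<noteq> 0} \<noteq> {}" using False by auto
  then have f_lo: "f lo \<noteq> 0"
    using Min_in[OF fin] by (auto simp: lo_def)
  have above_lo: "lo \<le> x" if "f x \<noteq> 0" for x
    using fin that by (simp add: lo_def)
  have outside: "f x = 0" if "x < lo \<or> p - lo < x" for x
    using that above_lo[of x] above_lo[of "p - x"] sym by (force simp: symmetric_about_def)
  define L where "L = nat (p - 2 * lo + 1)"
  have "2 * lo \<le> p"
    using outside[of "p - lo"] f_lo sym by (force simp: symmetric_about_def)
  then have L: "int L = p - 2 * lo + 1" "L \<ge> 1"
    by (auto simp: L_def)
  define cs where "cs = map (\<lambda>i. f (lo + int i)) [0..<L]"
  have cs_ne: "cs \<noteq> []" and length_cs: "length cs = L"
    using L by (auto simp: cs_def)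
  have rev_cs: "rev cs = cs"
  proof (rule nth_equalityI)
    fix i assume "i < length (rev cs)"
    then have i: "i < L" by (simp add: length_cs)
    have "rev cs ! i = f (lo + int (L - 1 - i))"
      using i by (simp add: rev_nth length_cs cs_def)
    also have "lo + int (L - 1 - i) = p - (lo + int i)"
      using i L by (simp add: of_nat_diff)
    finally show "rev cs ! i = cs ! i"
      using i sym by (simp add: cs_def symmetric_about_def)
  qed simp
  have hd_cs: "hd cs \<noteq> 0"
    using f_lo L by (simp add: cs_def hd_map upt_conv_Cons)
  moreover have "word_val (b_pow_word lo @ coeff_word cs @ b_pow_word lo) = (f, p)"
  proof -
    have "(if lo \<le> x \<and> x < lo + int L then cs ! nat (x - lo) else 0) = f x" for x
    proof (cases "lo \<le> x \<and> x < lo + int L")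
      case True
      then have "nat (x - lo) < L" by linarith
      with True show ?thesis by (simp add: cs_def)
    qed (use outside L in auto)
    then show ?thesis
      using L by (simp add: word_val_conj_coeff_word[OF cs_ne] length_cs fun_eq_iff)
  qed
  ultimately show ?thesis
    using palindrome_conj_coeff_word[OF cs_ne rev_cs] by metis
qed

subsection \<open>Every element is a product of three palindromes\<close>

definition tail_sum :: "(int \<Rightarrow> int) \<Rightarrow> int \<Rightarrow> int" where
  "tail_sum h x = (\<Sum>y | h y \<noteq> 0 \<and> x \<le> y. h y)"

lemma tail_sum_step:
  assumes "finite {y. h y \<noteq> 0}"
  shows "tail_sum h x = h x + tail_sum h (x + 1)"
proof (cases "h x = 0")
  case True
  then have "{y. h y \<noteq> 0 \<and> x \<le> y} = {y. h y \<noteq> 0 \<and> x + 1 \<le> y}"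
    by (auto simp: order_le_less)
  with True show ?thesis by (simp add: tail_sum_def)
next
  case False
  then have "{y. h y \<noteq> 0 \<and> x \<le> y} = insert x {y. h y \<noteq> 0 \<and> x + 1 \<le> y}"
    by force
  moreover have "finite {y. h y \<noteq> 0 \<and> x + 1 \<le> y}"
    using assms by (rule finite_subset[rotated]) auto
  ultimately show ?thesis
    by (simp add: tail_sum_def)
qed

lemma tail_sum_eq_0: "(\<And>y. h y \<noteq> 0 \<Longrightarrow> y < x) \<Longrightarrow> tail_sum h x = 0"
  by (force simp: tail_sum_def intro: sum.neutral)

lemma tail_sum_eq_total:
  "(\<And>y. h y \<noteq> 0 \<Longrightarrow> x \<le> y) \<Longrightarrow> tail_sum h x = (\<Sum>y | h y \<noteq> 0. h y)"
  unfolding tail_sum_def by (rule sum.cong) auto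

lemma split_into_symmetric:
  fixes h :: "int \<Rightarrow> int"
  assumes fin: "finite {x. h x \<noteq> 0}"
  obtains A B where "finite {x. A x \<noteq> 0}" "finite {x. B x \<noteq> 0}"
    "symmetric_about 0 A" "symmetric_about 1 B" "\<And>x. h x = A x + B x"
proof -
  obtain K where K: "\<And>y. h y \<noteq> 0 \<Longrightarrow> \<bar>y\<bar> \<le> K"
    using bdd_above_finite[OF finite_imageI[OF fin, of abs]]
    by (auto simp: bdd_above_def)
  define T where "T = tail_sum h"
  have T_step: "T x = h x + T (x + 1)" for x
    unfolding T_def by (rule tail_sum_step[OF fin])
  define B where "B x = T x + T (1 - x) - (\<Sum>y | h y \<noteq> 0. h y)" for x
  define A where "A x = h x - B x" for x
  have B_outside: "B x = 0" if "\<bar>x\<bar> > K" for x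
  proof (cases "x > K")
    case True
    have "T x = 0"
      unfolding T_def by (rule tail_sum_eq_0) (use K[unfolded abs_le_iff] True in fastforce)
    moreover have "T (1 - x) = (\<Sum>y | h y \<noteq> 0. h y)"
      unfolding T_def by (rule tail_sum_eq_total) (use K[unfolded abs_le_iff] True in fastforce)
    ultimately show ?thesis by (simp add: B_def)
  next
    case False
    with that have "x < - K" by simp
    have "T x = (\<Sum>y | h y \<noteq> 0. h y)"
      unfolding T_def by (rule tail_sum_eq_total) (use K[unfolded abs_le_iff] \<open>x < - K\<close> in fastforce)
    moreover have "T (1 - x) = 0"
      unfolding T_def by (rule tail_sum_eq_0) (use K[unfolded abs_le_iff] \<open>x < - K\<close> in fastforce)
    ultimately show ?thesis by (simp add: B_def)
  qed
  have "{x. B x \<noteq> 0} \<subseteq> {-K..K}"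
  proof
    fix x assume "x \<in> {x. B x \<noteq> 0}"
    then show "x \<in> {-K..K}"
      using B_outside[of x] by (simp add: abs_less_iff) arith
  qed
  then have fin_B: "finite {x. B x \<noteq> 0}"
    by (rule finite_subset) simp
  have fin_A: "finite {x. A x \<noteq> 0}"
    using fin fin_B by (rule finite_subset[rotated, OF finite_UnI]) (auto simp: A_def)
  have sym_A: "symmetric_about 0 A" \<comment> \<open>as \<open>h x - T x = - T (x + 1)\<close>\<close>
    unfolding symmetric_about_def
  proof
    fix x
    show "A x = A (0 - x)"
      using T_step[of x] T_step[of "- x"] by (simp add: A_def B_def algebra_simps)
  qed
  have sym_B: "symmetric_about 1 B"
    by (simp add: symmetric_about_def B_def)
  have "h x = A x + B x" for x
    by (simp add: A_def)
  with fin_A fin_B sym_A sym_B show ?thesis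
    by (rule that)
qed

lemma product_of_three_palindromes:
  assumes "(h, N) \<in> wr_carrier"
  obtains ps where "length ps = 3" "\<forall>p\<in>set ps. palindrome p" "wr_prod ps = (h, N)"
proof -
  obtain A B where fin_A: "finite {x. A x \<noteq> 0}" and fin_B: "finite {x. B x \<noteq> 0}"
    and sym_A: "symmetric_about 0 A" and sym_B: "symmetric_about 1 B"
    and split: "\<And>x. h x = A x + B x"
    using assms split_into_symmetric by (auto simp: wr_carrier_def)
  have "palindrome (A, 0)" "palindrome (B, 1)" "palindrome (\<lambda>x. 0, N - 1)"
    using fin_A fin_B sym_A sym_B by (auto intro!: symmetric_imp_palindrome simp: symmetric_about_def)
  moreover have "wr_prod [(A, 0), (B, 1), (\<lambda>x. 0, N - 1)] = (h, N)"
    by (simp add: wr_mult_def wr_one_def split fun_eq_iff)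
  ultimately show ?thesis
    using that[of "[(A, 0), (B, 1), (\<lambda>x. 0, N - 1)]"] by simp
qed

subsection \<open>An element that is not a product of two palindromes\<close>

lemma palindrome_product_symmetric:
  assumes "palindrome p" "palindrome q" "snd (wr_mult p q) = 0"
  shows "symmetric_about (snd p) (fst (wr_mult p q))"
proof -
  obtain f n g m where pq: "p = (f, n)" "q = (g, m)"
    by (cases p, cases q)
  have sym_f: "f x = f (n - x)" and sym_g: "g x = g (m - x)" for x
    using assms(1,2) palindrome_symmetric pq by (auto simp: symmetric_about_def)
  have "m = - n"
    using assms(3) pq by (simp add: wr_mult_def)
  have "f x + g (x - n) = f (n - x) + g (n - x - n)" for x
    using sym_f[of x] sym_g[of "x - n"] \<open>m = - n\<close> by simp
  then show ?thesis
    using pq by (simp add: symmetric_about_def wr_mult_def)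
qed

lemma short_palindrome_product_symmetric:
  assumes "\<forall>p\<in>set ps. palindrome p" "length ps \<le> 2" "snd (wr_prod ps) = 0"
  shows "\<exists>c. symmetric_about c (fst (wr_prod ps))"
proof -
  consider "ps = []" | p where "ps = [p]" | p q where "ps = [p, q]"
    using assms(2) by (cases ps rule: remdups_adj.cases) auto
  then show ?thesis
  proof cases
    case 1
    then show ?thesis by (auto simp: symmetric_about_def wr_one_def)
  next
    case 2
    then show ?thesis
      using assms(1) palindrome_symmetric[of p] by auto
  next
    case 3
    then show ?thesis
      using assms palindrome_product_symmetric[of p q] by auto
  qed
qed

text \<open>The element \<open>a \<cdot> b a\<^sup>2 b\<^sup>-\<^sup>1\<close>.\<close>

definition wr_witness :: wr where
  "wr_witness = (\<lambda>x. if x = 0 then 1 else if x = 1 then 2 else 0, 0)"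

lemma wr_witness_in_carrier: "wr_witness \<in> wr_carrier"
  unfolding wr_carrier_def wr_witness_def by (auto intro: finite_subset[of _ "{0, 1}"])

lemma wr_witness_not_symmetric: "\<not> symmetric_about c (fst wr_witness)"
proof
  assume sym: "symmetric_about c (fst wr_witness)"
  then have "fst wr_witness c = fst wr_witness 0"
    unfolding symmetric_about_def by (metis diff_zero)
  then have "c = 0"
    by (simp add: wr_witness_def split: if_splits)
  moreover have "fst wr_witness 1 = fst wr_witness (c - 1)"
    using sym by (simp add: symmetric_about_def)
  ultimately show False
    by (simp add: wr_witness_def)
qed

lemma wr_witness_palindrome_products:
  assumes "\<forall>p\<in>set ps. palindrome p" "wr_prod ps = wr_witness"
  shows "3 \<le> length ps"
proof (rule ccontr)
  assume "\<not> 3 \<le> length ps"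
  then obtain c where "symmetric_about c (fst (wr_prod ps))"
    using short_palindrome_product_symmetric[OF assms(1)] assms(2) by (auto simp: wr_witness_def)
  with assms(2) wr_witness_not_symmetric show False
    by simp
qed

lemma pal_length_le:
  assumes "\<forall>p\<in>set ps. palindrome p" "wr_prod ps = g"
  shows "pal_length g \<le> enat (length ps)"
  unfolding pal_length_def using assms by (intro INF_lower) auto

lemma pal_length_ge:
  assumes "\<And>ps. \<forall>p\<in>set ps. palindrome p \<Longrightarrow> wr_prod ps = g \<Longrightarrow> n \<le> length ps"
  shows "enat n \<le> pal_length g"
  unfolding pal_length_def using assms by (intro INF_greatest) auto

theorem theorem5p7:
  shows "pal_width = 3"
proof (rule antisym)
  show "pal_width \<le> 3"
    unfolding pal_width_def
  proof (rule SUP_least)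
    fix g assume "g \<in> wr_carrier"
    moreover obtain h N where "g = (h, N)"
      by fastforce
    ultimately obtain ps where "length ps = 3" "\<forall>p\<in>set ps. palindrome p" "wr_prod ps = g"
      using product_of_three_palindromes by blast
    then show "pal_length g \<le> 3"
      using pal_length_le by (metis numeral_eq_enat)
  qed
next
  have "enat 3 \<le> pal_length wr_witness"
    by (rule pal_length_ge) (rule wr_witness_palindrome_products)
  then show "3 \<le> pal_width"
    unfolding pal_width_def numeral_eq_enat
    using wr_witness_in_carrier by (meson SUP_upper order_trans)
qed

end
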